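(* Let $q=3^k$ for a positive integer $k$ and $n$ a positive integer. Let $S$ be a sequence of elements of $\mathbb{F}_q^n$ such that every subsequence $(g_1',g_2',g_3')$ of length $3$ satisfies $g_1'g_2'+g_2'g_3'+g_3'g_1'\neq 0$. Let $P:\mathbb{F}_q^n\times\mathbb{F}_q^n\times\mathbb{F}_q^n\to\mathbb{F}_q$ be $P(x,y,z)=\prod_{i=1}^{n} (1-(x_iy_i+y_iz_i+z_ix_i)^{q-1})$. Then $$|S|\leq 2(n+1)\,srk(P),$$ where the slice rank is taken for $P$ on the full domain $\mathbb{F}_q^n\times\mathbb{F}_q^n\times\mathbb{F}_q^n$.
   Context: Operations in $\mathbb{F}_q^n$ are coordinatewise. A sequence is a finite list with repetitions allowed; a subsequence of length $3$ is obtained by choosing $3$ distinct positions; $|S|$ is the length of $S$. A function $T:A^3\to\mathbb{F}$ (for a finite set $A$ and field $\mathbb{F}$) is a slice if it can be written as $T(x_1,x_2,x_3)=T_1(x_i)T_2(x_{i'},x_{i''})$ where $\{i,i',i''\}=\{1,2,3\}$, $T_1:A\to\mathbb{F}$, $T_2:A^2\to\mathbb{F}$. The slice rank $srk(T)$ is the smallest number $r$ such that $T$ is a linear combination of $r$ slices. *)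

theory Defs
  imports "HOL-Analysis.Analysis"
begin

definition is_slice :: "'a set \<Rightarrow> ('a \<Rightarrow> 'a \<Rightarrow> 'a \<Rightarrow> 'b::field) \<Rightarrow> bool" where
  "is_slice A T \<longleftrightarrow>
     (\<exists>T1 T2. \<forall>x\<in>A. \<forall>y\<in>A. \<forall>z\<in>A. T x y z = T1 x * T2 y z) \<or>
     (\<exists>T1 T2. \<forall>x\<in>A. \<forall>y\<in>A. \<forall>z\<in>A. T x y z = T1 y * T2 x z) \<or>
     (\<exists>T1 T2. \<forall>x\<in>A. \<forall>y\<in>A. \<forall>z\<in>A. T x y z = T1 z * T2 x y)"

definition slice_rank :: "'a set \<Rightarrow> ('a \<Rightarrow> 'a \<Rightarrow> 'a \<Rightarrow> 'b::field) \<Rightarrow> nat" where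
  "slice_rank A T = (LEAST r. \<exists>(c::nat \<Rightarrow> 'b) (f::nat \<Rightarrow> 'a \<Rightarrow> 'a \<Rightarrow> 'a \<Rightarrow> 'b).
      (\<forall>j<r. is_slice A (f j)) \<and>
      (\<forall>x\<in>A. \<forall>y\<in>A. \<forall>z\<in>A. T x y z = (\<Sum>j<r. c j * f j x y z)))"

end

theory Submission
  imports Defs "HOL-Number_Theory.Residues"
begin

(* A tensor whose restriction to B^3 is diagonal with nonzero diagonal entries has slice rank
  at least |B| (Tao): the slice through a diagonal point (b,b,b) can be eliminated together with b.
  By Fermat's little theorem P(x,y,z) is the indicator of x*y + y*z + z*x = 0.  In characteristic 3,
  x*x + x*z + z*x = x*(x - z), which vanishes only if x agrees with z on the support of x; so among
  distinct elements of S whose supports have the same size, P is diagonal.  Pigeonholing over the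
  n + 1 support sizes, and noting that no vector occurs three times in S (as 3*a*a = 0), gives
  |S| <= 2 |set S| <= 2 (n + 1) |B| <= 2 (n + 1) srk(P). *)

definition diagonal_tensor :: "('a \<Rightarrow> 'b::zero) \<Rightarrow> 'a \<Rightarrow> 'a \<Rightarrow> 'a \<Rightarrow> 'b" where
  "diagonal_tensor d x y z = (if x = y \<and> y = z then d x else 0)"

definition slice_decomposition ::
    "'a set \<Rightarrow> ('a \<Rightarrow> 'a \<Rightarrow> 'a \<Rightarrow> 'b::field) \<Rightarrow> 'i set \<Rightarrow> ('i \<Rightarrow> 'a \<Rightarrow> 'a \<Rightarrow> 'a \<Rightarrow> 'b) \<Rightarrow> bool"
  where
  "slice_decomposition A T J f \<longleftrightarrow>
     (\<forall>j\<in>J. is_slice A (f j)) \<and> (\<forall>x\<in>A. \<forall>y\<in>A. \<forall>z\<in>A. T x y z = (\<Sum>j\<in>J. f j x y z))"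

lemma is_sliceE:
  assumes "is_slice A T"
  obtains (first) T1 T2 where "\<And>x y z. x \<in> A \<Longrightarrow> y \<in> A \<Longrightarrow> z \<in> A \<Longrightarrow> T x y z = T1 x * T2 y z"
    | (second) T1 T2 where "\<And>x y z. x \<in> A \<Longrightarrow> y \<in> A \<Longrightarrow> z \<in> A \<Longrightarrow> T x y z = T1 y * T2 x z"
    | (third) T1 T2 where "\<And>x y z. x \<in> A \<Longrightarrow> y \<in> A \<Longrightarrow> z \<in> A \<Longrightarrow> T x y z = T1 z * T2 x y"
  using assms unfolding is_slice_def by blast

lemma is_slice_firstI:
  "(\<And>x y z. x \<in> A \<Longrightarrow> y \<in> A \<Longrightarrow> z \<in> A \<Longrightarrow> T x y z = T1 x * T2 y z) \<Longrightarrow> is_slice A T"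
  unfolding is_slice_def by blast

lemma is_slice_secondI:
  "(\<And>x y z. x \<in> A \<Longrightarrow> y \<in> A \<Longrightarrow> z \<in> A \<Longrightarrow> T x y z = T1 y * T2 x z) \<Longrightarrow> is_slice A T"
  unfolding is_slice_def by blast

lemma is_slice_thirdI:
  "(\<And>x y z. x \<in> A \<Longrightarrow> y \<in> A \<Longrightarrow> z \<in> A \<Longrightarrow> T x y z = T1 z * T2 x y) \<Longrightarrow> is_slice A T"
  unfolding is_slice_def by blast

lemma is_slice_subset: "is_slice A T \<Longrightarrow> B \<subseteq> A \<Longrightarrow> is_slice B T"
  unfolding is_slice_def by (elim disjE exE) (metis subsetD)+

lemma is_slice_scale:
  assumes "is_slice A T"
  shows "is_slice A (\<lambda>x y z. c * T x y z)"
  using assms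
proof (cases rule: is_sliceE)
  case (first T1 T2)
  then show ?thesis by (intro is_slice_firstI[of _ _ T1 "\<lambda>y z. c * T2 y z"]) simp
next
  case (second T1 T2)
  then show ?thesis by (intro is_slice_secondI[of _ _ T1 "\<lambda>x z. c * T2 x z"]) simp
next
  case (third T1 T2)
  then show ?thesis by (intro is_slice_thirdI[of _ _ T1 "\<lambda>x y. c * T2 x y"]) simp
qed

lemma is_slice_swap12:
  assumes "is_slice A T"
  shows "is_slice A (\<lambda>x y z. T y x z)"
  using assms
proof (cases rule: is_sliceE)
  case (first T1 T2)
  then show ?thesis by (intro is_slice_secondI[of _ _ T1 T2]) simp
next
  case (second T1 T2)
  then show ?thesis by (intro is_slice_firstI[of _ _ T1 T2]) simp
next
  case (third T1 T2)
  then show ?thesis by (intro is_slice_thirdI[of _ _ T1 "\<lambda>x y. T2 y x"]) simp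
qed

lemma is_slice_swap13:
  assumes "is_slice A T"
  shows "is_slice A (\<lambda>x y z. T z y x)"
  using assms
proof (cases rule: is_sliceE)
  case (first T1 T2)
  then show ?thesis by (intro is_slice_thirdI[of _ _ T1 "\<lambda>x y. T2 y x"]) simp
next
  case (second T1 T2)
  then show ?thesis by (intro is_slice_secondI[of _ _ T1 "\<lambda>x z. T2 z x"]) simp
next
  case (third T1 T2)
  then show ?thesis by (intro is_slice_firstI[of _ _ T1 "\<lambda>y z. T2 z y"]) simp
qed

lemma is_slice_diff_fix_first:
  assumes "is_slice A s" "b \<in> A"
  shows "is_slice A (\<lambda>x y z. s x y z - w x * s b y z)"
  using assms(1)
proof (cases rule: is_sliceE)
  case (first T1 T2)
  then show ?thesis
    by (intro is_slice_firstI[of _ _ "\<lambda>x. T1 x - w x * T1 b" T2]) (simp add: assms(2) algebra_simps)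
next
  case (second T1 T2)
  then show ?thesis
    by (intro is_slice_secondI[of _ _ T1 "\<lambda>x z. T2 x z - w x * T2 b z"])
      (simp add: assms(2) algebra_simps)
next
  case (third T1 T2)
  then show ?thesis
    by (intro is_slice_thirdI[of _ _ T1 "\<lambda>x y. T2 x y - w x * T2 b y"])
      (simp add: assms(2) algebra_simps)
qed

lemma diagonal_tensor_swap12: "(\<lambda>x y z. diagonal_tensor d y x z) = diagonal_tensor d"
  by (auto simp: diagonal_tensor_def fun_eq_iff)

lemma diagonal_tensor_swap13: "(\<lambda>x y z. diagonal_tensor d z y x) = diagonal_tensor d"
  by (auto simp: diagonal_tensor_def fun_eq_iff)

lemma slice_decomposition_swap12:
  "slice_decomposition A T J f \<Longrightarrow>
     slice_decomposition A (\<lambda>x y z. T y x z) J (\<lambda>j x y z. f j y x z)"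
  unfolding slice_decomposition_def by (simp add: is_slice_swap12)

lemma slice_decomposition_swap13:
  "slice_decomposition A T J f \<Longrightarrow>
     slice_decomposition A (\<lambda>x y z. T z y x) J (\<lambda>j x y z. f j z y x)"
  unfolding slice_decomposition_def by (simp add: is_slice_swap13)

lemma slice_decomposition_subset:
  "slice_decomposition A T J f \<Longrightarrow> B \<subseteq> A \<Longrightarrow> slice_decomposition B T J f"
  unfolding slice_decomposition_def by (meson is_slice_subset subsetD)

text \<open>Subtracting multiples of the slices evaluated at \<open>x = b\<close> kills the slice \<open>f j\<close>, which
  depends on \<open>x\<close> only through \<open>u x\<close>, while on \<open>(B - {b})\<^sup>3\<close> the diagonal tensor is unchanged.\<close>
lemma slice_decomposition_diagonal_remove:
  assumes dec: "slice_decomposition B (diagonal_tensor d) J f"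
    and "finite J" "j \<in> J" "b \<in> B"
    and fj: "\<And>x y z. x \<in> B \<Longrightarrow> y \<in> B \<Longrightarrow> z \<in> B \<Longrightarrow> f j x y z = u x * v y z"
    and "u b \<noteq> 0"
  shows "slice_decomposition (B - {b}) (diagonal_tensor d) (J - {j})
           (\<lambda>i x y z. f i x y z - u x / u b * f i b y z)"
  unfolding slice_decomposition_def
proof (intro conjI ballI)
  fix i assume "i \<in> J - {j}"
  then have "is_slice B (f i)" using dec by (simp add: slice_decomposition_def)
  then show "is_slice (B - {b}) (\<lambda>x y z. f i x y z - u x / u b * f i b y z)"
    by (intro is_slice_subset[OF is_slice_diff_fix_first]) (use \<open>b \<in> B\<close> in auto)
next
  fix x y z assume xyz: "x \<in> B - {b}" "y \<in> B - {b}" "z \<in> B - {b}"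
  define g where "g i = f i x y z - u x / u b * f i b y z" for i
  have "g j = 0"
    using xyz \<open>b \<in> B\<close> \<open>u b \<noteq> 0\<close> by (simp add: g_def fj)
  have "(\<Sum>i\<in>J. g i) = diagonal_tensor d x y z - u x / u b * diagonal_tensor d b y z"
    using dec xyz \<open>b \<in> B\<close>
    by (simp add: g_def slice_decomposition_def sum_subtractf sum_distrib_left)
  also have "diagonal_tensor d b y z = 0"
    using xyz by (auto simp: diagonal_tensor_def)
  finally have "diagonal_tensor d x y z = g j + (\<Sum>i\<in>J - {j}. g i)"
    using \<open>finite J\<close> \<open>j \<in> J\<close> by (simp add: sum.remove)
  then show "diagonal_tensor d x y z = (\<Sum>i\<in>J - {j}. f i x y z - u x / u b * f i b y z)"
    using \<open>g j = 0\<close> by (simp add: g_def)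
qed

lemma card_le_card_if_diagonal_slice_decomposition:
  assumes "finite J" "finite B" "\<forall>x\<in>B. d x \<noteq> 0"
    and "slice_decomposition B (diagonal_tensor d) J f"
  shows "card B \<le> card J"
  using assms
proof (induction "card J" arbitrary: J B f rule: less_induct)
  case less
  show ?case
  proof (cases "B = {}")
    case False
    then obtain b where b: "b \<in> B" by blast
    have "d b = diagonal_tensor d b b b"
      by (simp add: diagonal_tensor_def)
    also have "\<dots> = (\<Sum>j\<in>J. f j b b b)"
      using less.prems(4) b unfolding slice_decomposition_def by blast
    finally have "d b = (\<Sum>j\<in>J. f j b b b)" .
    then obtain j where j: "j \<in> J" "f j b b b \<noteq> 0"
      using less.prems(3) b by (metis sum.neutral)
    have "is_slice B (f j)"
      using less.prems(4) j by (simp add: slice_decomposition_def)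
    then obtain g where g: "slice_decomposition (B - {b}) (diagonal_tensor d) (J - {j}) g"
    proof (cases rule: is_sliceE)
      \<comment> \<open>swapping arguments, which fixes the diagonal tensor, reduces to slices of the first kind\<close>
      case (first u v)
      then have "u b \<noteq> 0" using j b by auto
      from slice_decomposition_diagonal_remove[OF less.prems(4,1) j(1) b first this] that
      show thesis by blast
    next
      case (second u v)
      then have "u b \<noteq> 0" using j b by auto
      from slice_decomposition_swap12[OF less.prems(4)]
      have "slice_decomposition B (diagonal_tensor d) J (\<lambda>i x y z. f i y x z)"
        by (simp only: diagonal_tensor_swap12)
      from slice_decomposition_diagonal_remove[OF this less.prems(1) j(1) b, of u v]
        second \<open>u b \<noteq> 0\<close> that
      show thesis by blast
    next
      case (third u v)
      then have "u b \<noteq> 0" using j b by auto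
      from slice_decomposition_swap13[OF less.prems(4)]
      have "slice_decomposition B (diagonal_tensor d) J (\<lambda>i x y z. f i z y x)"
        by (simp only: diagonal_tensor_swap13)
      from slice_decomposition_diagonal_remove[OF this less.prems(1) j(1) b, of u "\<lambda>y z. v z y"]
        third \<open>u b \<noteq> 0\<close> that
      show thesis by blast
    qed
    have "card (J - {j}) < card J"
      using less.prems(1) j(1) by (rule card_Diff1_less)
    then have "card (B - {b}) \<le> card (J - {j})"
      using less.prems by (intro less.hyps[OF _ _ _ _ g]) auto
    then show ?thesis
      using card.remove[OF less.prems(2) b] card.remove[OF less.prems(1) j(1)] by linarith
  qed simp
qed

lemma slice_rank_attained:
  fixes T :: "'a \<Rightarrow> 'a \<Rightarrow> 'a \<Rightarrow> 'b::field"
  assumes "finite A"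
  obtains f where "slice_decomposition A T {..<slice_rank A T} f"
proof -
  let ?decomposable = "\<lambda>r. \<exists>(c::nat \<Rightarrow> 'b) (f::nat \<Rightarrow> 'a \<Rightarrow> 'a \<Rightarrow> 'a \<Rightarrow> 'b).
      (\<forall>j<r. is_slice A (f j)) \<and> (\<forall>x\<in>A. \<forall>y\<in>A. \<forall>z\<in>A. T x y z = (\<Sum>j<r. c j * f j x y z))"
  obtain e where e: "bij_betw e {..<card A} A"
    using ex_bij_betw_nat_finite[OF assms] by (auto simp: atLeast0LessThan)
  define f where "f j x y z = (if x = e j then T (e j) y z else 0)" for j x y z
  have "?decomposable (card A)"
  proof (intro exI conjI allI impI ballI)
    show "is_slice A (f j)" for j
      by (rule is_slice_firstI[of _ _ "\<lambda>x. if x = e j then 1 else 0" "T (e j)"]) (simp add: f_def)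
    fix x y z assume "x \<in> A"
    have "(\<Sum>j<card A. 1 * f j x y z) = (\<Sum>a\<in>A. if x = a then T a y z else 0)"
      using sum.reindex_bij_betw[OF e, of "\<lambda>a. if x = a then T a y z else 0"]
      by (simp add: f_def)
    also have "\<dots> = T x y z"
      using \<open>x \<in> A\<close> assms by simp
    finally show "T x y z = (\<Sum>j<card A. 1 * f j x y z)" by simp
  qed
  then have "?decomposable (slice_rank A T)"
    unfolding slice_rank_def by (rule LeastI)
  then obtain c g where "\<forall>j<slice_rank A T. is_slice A (g j)"
    and "\<forall>x\<in>A. \<forall>y\<in>A. \<forall>z\<in>A. T x y z = (\<Sum>j<slice_rank A T. c j * g j x y z)"
    by blast
  then have "slice_decomposition A T {..<slice_rank A T} (\<lambda>j x y z. c j * g j x y z)"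
    by (simp add: slice_decomposition_def is_slice_scale)
  then show thesis by (rule that)
qed

lemma card_le_slice_rank_if_diagonal:
  fixes T :: "'a \<Rightarrow> 'a \<Rightarrow> 'a \<Rightarrow> 'b::field"
  assumes "finite A" "B \<subseteq> A" "\<forall>x\<in>B. d x \<noteq> 0"
    and "\<forall>x\<in>B. \<forall>y\<in>B. \<forall>z\<in>B. T x y z = diagonal_tensor d x y z"
  shows "card B \<le> slice_rank A T"
proof -
  obtain f where "slice_decomposition A T {..<slice_rank A T} f"
    using slice_rank_attained[OF assms(1)] .
  then have "slice_decomposition B T {..<slice_rank A T} f"
    using assms(2) by (rule slice_decomposition_subset)
  then have "slice_decomposition B (diagonal_tensor d) {..<slice_rank A T} f"
    using assms(4) by (simp add: slice_decomposition_def)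
  then have "card B \<le> card {..<slice_rank A T}"
    using assms(1-3) finite_subset
    by (intro card_le_card_if_diagonal_slice_decomposition) auto
  then show ?thesis by simp
qed

lemma three_eq_0_if_card_eq_power_3:
  assumes "k > 0" and "CARD('a::{field,finite}) = 3 ^ k"
  shows "(3::'a) = 0"
proof -
  have "prime CHAR('a)"
    by (intro prime_CHAR_semidom finite_imp_CHAR_pos) simp
  moreover have "CHAR('a) dvd 3 ^ k"
    using CHAR_dvd_CARD[where 'a='a] assms(2) by simp
  ultimately have "CHAR('a) dvd 3"
    using prime_dvd_power by blast
  then have "of_nat 3 = (0::'a)"
    by (simp only: of_nat_eq_0_iff_char_dvd)
  then show ?thesis by simp
qed

lemma power_card_minus_one_eq_one:
  fixes a :: "'a::{field,finite}"
  assumes "a \<noteq> 0"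
  shows "a ^ (CARD('a) - 1) = 1"
proof -
  have "(\<Prod>y\<in>UNIV-{0}. a * y) = (\<Prod>y\<in>UNIV-{0}. y)"
    by (rule prod.reindex_bij_witness[of _ "\<lambda>y. y / a" "\<lambda>y. a * y"]) (use assms in auto)
  moreover have "(\<Prod>y\<in>UNIV-{0}. a * y) = a ^ (CARD('a) - 1) * (\<Prod>y\<in>UNIV-{0}. y)"
    by (simp add: prod.distrib card_Diff_singleton)
  moreover have "(\<Prod>y\<in>UNIV-{0::'a}. y) \<noteq> 0"
    by simp
  ultimately show ?thesis
    by (metis mult_cancel_right2)
qed

lemma prod_one_minus_power_card_minus_one:
  fixes v :: "'a::{field,finite} ^ 'n"
  shows "(\<Prod>i\<in>UNIV. 1 - v $ i ^ (CARD('a) - 1)) = (if v = 0 then 1 else 0)"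
proof (cases "v = 0")
  case True
  have "card {0::'a, 1} \<le> CARD('a)"
    by (rule card_mono) simp_all
  then have "CARD('a) - 1 \<noteq> 0"
    by simp
  then show ?thesis
    using True by (simp add: power_0_left)
next
  case False
  then obtain i where "v $ i \<noteq> 0"
    by (auto simp: vec_eq_iff)
  then have "v $ i ^ (CARD('a) - 1) = 1"
    by (rule power_card_minus_one_eq_one)
  then have "(\<Prod>i\<in>UNIV. 1 - v $ i ^ (CARD('a) - 1)) = 0"
    by (intro prod_zero) auto
  then show ?thesis
    using False by simp
qed

lemma count_list_le_2_if_triple_sums_nonzero:
  fixes S :: "'r::comm_ring_1 list"
  assumes "(3::'r) = 0"
    and "\<forall>i j l. i < length S \<and> j < length S \<and> l < length S \<and> i \<noteq> j \<and> j \<noteq> l \<and> i \<noteq> l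
           \<longrightarrow> S ! i * S ! j + S ! j * S ! l + S ! l * S ! i \<noteq> 0"
  shows "count_list S a \<le> 2"
proof (rule ccontr)
  assume "\<not> count_list S a \<le> 2"
  then have "3 \<le> card {i. i < length S \<and> a = S ! i}"
    by (simp add: count_list_eq_length_filter length_filter_conv_card)
  then obtain I where "I \<subseteq> {i. i < length S \<and> a = S ! i}" "card I = 3"
    by (rule obtain_subset_with_card_n)
  then obtain i j l where "i < length S" "j < length S" "l < length S" "i \<noteq> j" "j \<noteq> l" "i \<noteq> l"
    and "S ! i = a" "S ! j = a" "S ! l = a"
    by (auto simp: card_3_iff)
  then have "a * a + a * a + a * a \<noteq> 0"
    using assms(2) by metis
  moreover have "a * a + a * a + a * a = 3 * (a * a)"
    by (simp add: algebra_simps)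
  ultimately show False
    using assms(1) by simp
qed

lemma triple_sums_nonzero_on_set:
  fixes S :: "'r::comm_ring_1 list"
  assumes "\<forall>i j l. i < length S \<and> j < length S \<and> l < length S \<and> i \<noteq> j \<and> j \<noteq> l \<and> i \<noteq> l
           \<longrightarrow> S ! i * S ! j + S ! j * S ! l + S ! l * S ! i \<noteq> 0"
  shows "\<forall>x\<in>set S. \<forall>y\<in>set S. \<forall>z\<in>set S. x \<noteq> y \<and> y \<noteq> z \<and> x \<noteq> z \<longrightarrow> x * y + y * z + z * x \<noteq> 0"
proof (intro ballI impI)
  fix x y z assume "x \<in> set S" "y \<in> set S" "z \<in> set S" and "x \<noteq> y \<and> y \<noteq> z \<and> x \<noteq> z"
  then obtain i j l where "i < length S" "j < length S" "l < length S"
    and "S ! i = x" "S ! j = y" "S ! l = z" "i \<noteq> j" "j \<noteq> l" "i \<noteq> l"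
    by (metis in_set_conv_nth)
  then show "x * y + y * z + z * x \<noteq> 0"
    using assms by blast
qed

lemma length_le_2_mul_card_set:
  assumes "\<And>a. count_list S a \<le> 2"
  shows "length S \<le> 2 * card (set S)"
proof -
  have "length S = (\<Sum>a\<in>set S. count_list S a)"
    by (simp add: sum_count_set)
  also have "\<dots> \<le> (\<Sum>a\<in>set S. 2)"
    by (rule sum_mono) (rule assms)
  finally show ?thesis by simp
qed

lemma obtain_large_fiber:
  assumes "finite A" "\<And>x. x \<in> A \<Longrightarrow> f x \<le> (N::nat)"
  obtains s where "card A \<le> Suc N * card {x\<in>A. f x = s}"
proof -
  define fiber_size where "fiber_size s = card {x\<in>A. f x = s}" for s
  obtain s where s: "s \<in> {..N}" "\<And>t. t \<in> {..N} \<Longrightarrow> fiber_size t \<le> fiber_size s"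
    using Max_in[of "fiber_size ` {..N}"] Max_ge[of "fiber_size ` {..N}"] by fastforce
  have "f ` A \<subseteq> {..N}"
    using assms(2) by auto
  from sum.group[OF assms(1) finite_atMost this, where h = "\<lambda>_. 1::nat"]
  have "card A = (\<Sum>t\<le>N. fiber_size t)"
    by (simp add: fiber_size_def)
  also have "\<dots> \<le> Suc N * fiber_size s"
    using sum_bounded_above[of "{..N}" fiber_size "fiber_size s"] s(2) by simp
  finally show thesis
    by (intro that[of s]) (simp add: fiber_size_def)
qed

lemma vec_eq_if_mult_diff_eq_0:
  fixes x z :: "'a::idom ^ 'n"
  assumes "x * (x - z) = 0" and "card {i. x $ i \<noteq> 0} = card {i. z $ i \<noteq> 0}"
  shows "x = z"
proof -
  have coord: "x $ i = 0 \<or> x $ i = z $ i" for i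
    using assms(1) by (auto simp: vec_eq_iff)
  then have "{i. x $ i \<noteq> 0} \<subseteq> {i. z $ i \<noteq> 0}"
    by (metis (mono_tags) mem_Collect_eq subsetI)
  then have "{i. x $ i \<noteq> 0} = {i. z $ i \<noteq> 0}"
    using assms(2) by (simp add: card_subset_eq)
  then show "x = z"
    using coord by (metis (mono_tags) mem_Collect_eq vec_eq_iff)
qed

lemma triple_sum_eq_0_iff:
  fixes B :: "('a::idom ^ 'n) set"
  assumes three: "(3::'a) = 0"
    and distinct: "\<forall>x\<in>B. \<forall>y\<in>B. \<forall>z\<in>B. x \<noteq> y \<and> y \<noteq> z \<and> x \<noteq> z \<longrightarrow> x * y + y * z + z * x \<noteq> 0"
    and support: "\<forall>x\<in>B. \<forall>z\<in>B. card {i. x $ i \<noteq> 0} = card {i. z $ i \<noteq> 0}"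
    and "x \<in> B" "y \<in> B" "z \<in> B"
  shows "x * y + y * z + z * x = 0 \<longleftrightarrow> x = y \<and> y = z"
proof -
  have three_vec: "(3::'a ^ 'n) = 0"
    using three by (simp add: vec_eq_iff)
  have square_sum: "x * x + x * z + z * x = 3 * (x * z) + x * (x - z)" for x z :: "'a ^ 'n"
    by (simp add: algebra_simps)
  have pair: "x * x + x * z + z * x \<noteq> 0" if "x \<in> B" "z \<in> B" "x \<noteq> z" for x z
  proof
    assume "x * x + x * z + z * x = 0"
    then have "x * (x - z) = 0"
      using square_sum three_vec by simp
    then show False
      using vec_eq_if_mult_diff_eq_0 support that by blast
  qed
  show ?thesis
  proof (cases "x = y \<and> y = z")
    case True
    then show ?thesis
      using square_sum[of x x] three_vec by simp
  next
    case False
    then consider "x = y" "y \<noteq> z" | "y = z" "x \<noteq> y" | "x = z" "x \<noteq> y" | "x \<noteq> y" "y \<noteq> z" "x \<noteq> z"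
      by blast
    then have "x * y + y * z + z * x \<noteq> 0"
    proof cases
      case 1
      then show ?thesis using pair[of x z] assms(4-6) by simp
    next
      case 2
      then show ?thesis using pair[of z x] assms(4-6) by (simp add: ac_simps)
    next
      case 3
      then show ?thesis using pair[of x y] assms(4-6) by (simp add: ac_simps)
    next
      case 4
      then show ?thesis using distinct assms(4-6) by blast
    qed
    with False show ?thesis by simp
  qed
qed

theorem corollary4p10:
  fixes S :: "('a::{field,finite} ^ 'n) list" and k :: nat
  assumes "k > 0" and "CARD('a) = 3 ^ k"
    and "\<forall>i j l. i < length S \<and> j < length S \<and> l < length S \<and> i \<noteq> j \<and> j \<noteq> l \<and> i \<noteq> l
            \<longrightarrow> S ! i * S ! j + S ! j * S ! l + S ! l * S ! i \<noteq> 0"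
  shows "length S \<le> 2 * (CARD('n) + 1) *
           slice_rank (UNIV :: ('a ^ 'n) set)
             (\<lambda>x y z. \<Prod>i\<in>UNIV. (1 - (x $ i * y $ i + y $ i * z $ i + z $ i * x $ i) ^ (CARD('a) - 1)))"
    (is "_ \<le> _ * slice_rank _ ?P")
proof -
  have three: "(3::'a) = 0"
    using assms(1,2) by (rule three_eq_0_if_card_eq_power_3)
  then have three_vec: "(3::'a ^ 'n) = 0"
    by (simp add: vec_eq_iff)
  define support_size where "support_size x = card {i. x $ i \<noteq> 0}" for x :: "'a ^ 'n"
  have "support_size x \<le> CARD('n)" for x
    unfolding support_size_def by (rule card_mono) simp_all
  then obtain s where s: "card (set S) \<le> Suc CARD('n) * card {x \<in> set S. support_size x = s}"
    using obtain_large_fiber[of "set S" support_size "CARD('n)"] by blast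
  define B where "B = {x \<in> set S. support_size x = s}"
  have B_distinct: "\<forall>x\<in>B. \<forall>y\<in>B. \<forall>z\<in>B. x \<noteq> y \<and> y \<noteq> z \<and> x \<noteq> z \<longrightarrow> x * y + y * z + z * x \<noteq> 0"
    using triple_sums_nonzero_on_set[OF assms(3)] unfolding B_def by blast
  have B_support: "\<forall>x\<in>B. \<forall>z\<in>B. card {i. x $ i \<noteq> 0} = card {i. z $ i \<noteq> 0}"
    by (simp add: B_def support_size_def)
  have "\<forall>x\<in>B. \<forall>y\<in>B. \<forall>z\<in>B. ?P x y z = diagonal_tensor (\<lambda>_. 1) x y z"
  proof (intro ballI)
    fix x y z assume "x \<in> B" "y \<in> B" "z \<in> B"
    have "?P x y z = (if x * y + y * z + z * x = 0 then 1 else 0)"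
      using prod_one_minus_power_card_minus_one[of "x * y + y * z + z * x"] by simp
    also have "\<dots> = diagonal_tensor (\<lambda>_. 1) x y z"
      using triple_sum_eq_0_iff[OF three B_distinct B_support \<open>x \<in> B\<close> \<open>y \<in> B\<close> \<open>z \<in> B\<close>]
      by (simp add: diagonal_tensor_def)
    finally show "?P x y z = diagonal_tensor (\<lambda>_. 1) x y z" .
  qed
  then have "card B \<le> slice_rank UNIV ?P"
    by (intro card_le_slice_rank_if_diagonal[where d = "\<lambda>_. 1"]) simp_all
  have "length S \<le> 2 * card (set S)"
    using count_list_le_2_if_triple_sums_nonzero[OF three_vec assms(3)] by (rule length_le_2_mul_card_set)
  also have "\<dots> \<le> 2 * (Suc CARD('n) * card B)"
    using s by (simp add: B_def)
  also have "\<dots> \<le> 2 * (Suc CARD('n) * slice_rank UNIV ?P)"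
    using \<open>card B \<le> slice_rank UNIV ?P\<close> by (intro mult_le_mono2)
  finally show ?thesis
    by (simp add: mult.assoc)
qed

end
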